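(* Let $A$ be a general metric space, $M$ a left module on $A$ and $\mathcal F$ a filter on $A$. Then $\sup_{x\in A}[M^-(\mathcal F)(x),M(x)]\ \le\ \lim^+_{\mathcal F}M$, with equality if $\mathcal F$ is weakly flat. In particular, for weakly flat filters $\mathcal F_1,\mathcal F_2$, $$\sup_{x\in A}[M^-(\mathcal F_1)(x),M^-(\mathcal F_2)(x)]=\lim^+_{x\in\mathcal F_1}\lim^-_{y\in\mathcal F_2}A(x,y).$$
   Context: $[0,\infty]$ with $+$ ($x+\infty=\infty$), $[x,y]=\max(y-x,0)$ for finite $x,y$, $[x,\infty]=\infty$ for $x<\infty$, $[\infty,y]=0$; $\inf\emptyset=\infty$, $\sup\emptyset=0$. A general metric space $A$ is a set with $A(-,-):A\times A\to[0,\infty]$, $A(x,x)=0$, $A(x,z)\le A(x,y)+A(y,z)$. A left module is $M:A\to[0,\infty]$ with $M(x)\le M(y)+A(x,y)$. A filter on $A$ is a nonempty set of nonempty subsets closed under finite intersections and supersets; $\lim^+_{\mathcal F}t=\inf_{f\in\mathcal F}\sup_{x\in f}t(x)$, $\lim^-_{\mathcal F}t=\sup_{f\in\mathcal F}\inf_{x\in f}t(x)$; $M^-(\mathcal F)(x)=\lim^-_{y\in\mathcal F}A(x,y)$; $\mathcal F$ is weakly flat iff $\lim^+_{\mathcal F}M^-(\mathcal F)=0$. *)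

theory Defs
  imports "HOL-Library.Extended_Nonnegative_Real" "HOL-Library.Liminf_Limsup"
begin

text \<open>Values in [0,\<infinity>] are modelled by ennreal; the carrier of the metric space is the type 'a.
  Filters are Isabelle filters different from bot (proper filters).\<close>

definition ihom :: "ennreal \<Rightarrow> ennreal \<Rightarrow> ennreal" where
  "ihom x y = (if x = \<infinity> then 0 else if y = \<infinity> then \<infinity> else y - x)"

definition gen_metric :: "('a \<Rightarrow> 'a \<Rightarrow> ennreal) \<Rightarrow> bool" where
  "gen_metric d \<longleftrightarrow> (\<forall>x. d x x = 0) \<and> (\<forall>x y z. d x z \<le> d x y + d y z)"

definition left_module :: "('a \<Rightarrow> 'a \<Rightarrow> ennreal) \<Rightarrow> ('a \<Rightarrow> ennreal) \<Rightarrow> bool" where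
  "left_module d M \<longleftrightarrow> (\<forall>x y. M x \<le> M y + d x y)"

definition Mminus :: "('a \<Rightarrow> 'a \<Rightarrow> ennreal) \<Rightarrow> 'a filter \<Rightarrow> 'a \<Rightarrow> ennreal" where
  "Mminus d F x = Liminf F (\<lambda>y. d x y)"

definition weakly_flat :: "('a \<Rightarrow> 'a \<Rightarrow> ennreal) \<Rightarrow> 'a filter \<Rightarrow> bool" where
  "weakly_flat d F \<longleftrightarrow> Limsup F (Mminus d F) = 0"

end

theory Submission
  imports Defs
begin

(* Truncated subtraction is right adjoint to addition: ihom x y <= z iff y <= z + x.
   For a left module, M x <= M y + d x y; passing to the limit along y in F gives
   M x <= Limsup F M + Mminus d F x, which is the inequality. Conversely M <= S + Mminus d F
   pointwise for the supremum S, so Limsup F M <= S + Limsup F (Mminus d F), and the last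
   summand vanishes for a weakly flat filter. The triangle inequality makes Mminus d F2 itself
   a left module, which gives the second statement. *)

lemma ihom_le_iff: "ihom x y \<le> z \<longleftrightarrow> y \<le> z + x"
  by (auto simp: ihom_def ennreal_minus_le_iff add.commute top_unique)

lemma Liminf_add_le_Limsup_add_Liminf:
  fixes f g :: "'a \<Rightarrow> ennreal"
  assumes F: "F \<noteq> bot"
  shows "Liminf F (\<lambda>y. f y + g y) \<le> Limsup F f + Liminf F g"
proof (cases "Liminf F g = \<infinity>")
  case False
  have "Liminf F (\<lambda>y. f y + g y) \<le> (SUP x\<in>{x. Q x}. f x) + Liminf F g"
    if Q: "eventually Q F" for Q
  proof -
    have "eventually (\<lambda>y. f y + g y \<le> (SUP x\<in>{x. Q x}. f x) + g y) F"
      using Q by (rule eventually_mono) (auto intro!: add_mono SUP_upper)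
    then have "Liminf F (\<lambda>y. f y + g y) \<le> Liminf F (\<lambda>y. (SUP x\<in>{x. Q x}. f x) + g y)"
      by (rule Liminf_mono)
    then show ?thesis
      by (simp add: Liminf_const_add[OF F])
  qed
  then have "Liminf F (\<lambda>y. f y + g y) - Liminf F g \<le> Limsup F f"
    unfolding Limsup_def using False by (intro INF_greatest) (simp add: ennreal_minus_le_iff add.commute)
  then show ?thesis
    using False by (simp add: ennreal_minus_le_iff add.commute)
qed simp

lemma left_module_Mminus:
  assumes triangle: "\<And>x y z. d x z \<le> d x y + d y z" and F: "F \<noteq> bot"
  shows "left_module d (Mminus d F)"
  unfolding left_module_def
proof (intro allI)
  fix x x'
  have "Mminus d F x \<le> Liminf F (\<lambda>y. d x x' + d x' y)"
    unfolding Mminus_def by (intro Liminf_mono) (simp add: triangle)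
  also have "\<dots> = d x x' + Mminus d F x'"
    unfolding Mminus_def by (rule Liminf_const_add[OF F])
  finally show "Mminus d F x \<le> Mminus d F x' + d x x'"
    by (simp add: add.commute)
qed

lemma left_module_le_Limsup_add_Mminus:
  assumes "left_module d M" and F: "F \<noteq> bot"
  shows "M x \<le> Limsup F M + Mminus d F x"
proof -
  have "M x = Liminf F (\<lambda>y. M x)"
    by (rule Liminf_const[OF F, symmetric])
  also have "\<dots> \<le> Liminf F (\<lambda>y. M y + d x y)"
    using assms(1) unfolding left_module_def by (intro Liminf_mono) auto
  also have "\<dots> \<le> Limsup F M + Mminus d F x"
    unfolding Mminus_def by (rule Liminf_add_le_Limsup_add_Liminf[OF F])
  finally show ?thesis .
qed

lemma SUP_ihom_Mminus_le_Limsup: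
  assumes "left_module d M" and "F \<noteq> bot"
  shows "(SUP x. ihom (Mminus d F x) (M x)) \<le> Limsup F M"
  using left_module_le_Limsup_add_Mminus[OF assms] by (intro SUP_least) (simp add: ihom_le_iff)

lemma Limsup_le_SUP_ihom_Mminus:
  assumes F: "F \<noteq> bot" and "weakly_flat d F"
  shows "Limsup F M \<le> (SUP x. ihom (Mminus d F x) (M x))" (is "_ \<le> ?S")
proof -
  have "M x \<le> ?S + Mminus d F x" for x
    by (subst ihom_le_iff[symmetric]) (rule SUP_upper, simp)
  then have "Limsup F M \<le> Limsup F (\<lambda>x. ?S + Mminus d F x)"
    by (intro Limsup_mono) simp
  also have "\<dots> = ?S + Limsup F (Mminus d F)"
    by (rule Limsup_const_add[OF F])
  finally show ?thesis
    using \<open>weakly_flat d F\<close> by (simp add: weakly_flat_def)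
qed

theorem mainTheorem15:
  fixes d :: "'a \<Rightarrow> 'a \<Rightarrow> ennreal" and M :: "'a \<Rightarrow> ennreal" and F :: "'a filter"
  assumes "gen_metric d" and "left_module d M" and "F \<noteq> bot"
  shows "(SUP x. ihom (Mminus d F x) (M x)) \<le> Limsup F M
    \<and> (weakly_flat d F \<longrightarrow> (SUP x. ihom (Mminus d F x) (M x)) = Limsup F M)
    \<and> (\<forall>F1 F2. F1 \<noteq> bot \<longrightarrow> F2 \<noteq> bot \<longrightarrow> weakly_flat d F1 \<longrightarrow> weakly_flat d F2 \<longrightarrow>
          (SUP x. ihom (Mminus d F1 x) (Mminus d F2 x)) = Limsup F1 (\<lambda>x. Liminf F2 (\<lambda>y. d x y)))"
proof (intro conjI impI allI)
  show "(SUP x. ihom (Mminus d F x) (M x)) \<le> Limsup F M"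
    using assms(2,3) by (rule SUP_ihom_Mminus_le_Limsup)
  assume "weakly_flat d F"
  then show "(SUP x. ihom (Mminus d F x) (M x)) = Limsup F M"
    using assms(2,3) by (intro antisym SUP_ihom_Mminus_le_Limsup Limsup_le_SUP_ihom_Mminus)
next
  fix F1 F2 :: "'a filter"
  assume "F1 \<noteq> bot" "F2 \<noteq> bot" "weakly_flat d F1"
  have "left_module d (Mminus d F2)"
    using \<open>gen_metric d\<close> \<open>F2 \<noteq> bot\<close> unfolding gen_metric_def by (intro left_module_Mminus) auto
  with \<open>F1 \<noteq> bot\<close> \<open>weakly_flat d F1\<close>
  have "(SUP x. ihom (Mminus d F1 x) (Mminus d F2 x)) = Limsup F1 (Mminus d F2)"
    by (intro antisym SUP_ihom_Mminus_le_Limsup Limsup_le_SUP_ihom_Mminus)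
  then show "(SUP x. ihom (Mminus d F1 x) (Mminus d F2 x)) = Limsup F1 (\<lambda>x. Liminf F2 (\<lambda>y. d x y))"
    by (simp add: Mminus_def[abs_def])
qed

end
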